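(* Let $(\Omega,\mathcal{F},\mathbb{P})$ be a probability space, let $\rho$ be a random variable with $\rho>0$ almost surely, $\mathbb{E}[\rho]<\infty$, and continuous CDF $F_\rho$, and set $\delta:=\mathbb{E}[\rho]$. Let $\alpha\in(0,1)$ and $x>0$, and for a random variable $X$ let $V(X):=F_X^{-1}(\alpha)$, the $\alpha$-quantile of $X$ given by the right-continuous quantile function (equivalently $V(X)=\int_{[0,1]}F_X^{-1}(z)\,m(dz)$ with $m$ the point mass at $\alpha$). Define for $c\in(0,1)$ $$\zeta(c):=\frac{m([c,1])}{\int_c^1F_\rho^{-1}(1-z)\,dz}=\frac{\mathbf{1}_{\{c\le\alpha\}}}{\int_c^1F_\rho^{-1}(1-z)\,dz},\qquad \gamma^*:=\sup_{c\in(0,1)}\zeta(c).$$ Then $\gamma^*=\zeta(\alpha)>1/\delta$, and $X^*:=k^*\mathbf{1}_{\{\rho\le\beta^*\}}$ with $\beta^*:=F_\rho^{-1}(1-\alpha)$ and $k^*:=x/\mathbb{E}[\rho\mathbf{1}_{\{\rho\le\beta^*\}}]$ is optimal for the problem of maximizing $V(X)$ over random variables $X$ subject to $\mathbb{E}[\rho X]\le x$ and $X\ge0$.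
   Context: $F_Y^{-1}$ denotes the right-continuous quantile function (right-continuous inverse of the CDF) of a random variable $Y$. *)

theory Defs
  imports "HOL-Probability.Probability"
begin

definition quantile_rc :: "(real \<Rightarrow> real) \<Rightarrow> real \<Rightarrow> real" where
  "quantile_rc F u = Inf {t. F t > u}"

definition rv_quantile :: "'a measure \<Rightarrow> ('a \<Rightarrow> real) \<Rightarrow> real \<Rightarrow> real" where
  "rv_quantile M X = quantile_rc (cdf (distr M borel X))"

definition zeta :: "'a measure \<Rightarrow> ('a \<Rightarrow> real) \<Rightarrow> real \<Rightarrow> real \<Rightarrow> real" where
  "zeta M \<rho> \<alpha> c = (if c \<le> \<alpha> then 1 else 0) /
      (LINT z:{c..1}|lborel. rv_quantile M \<rho> (1 - z))"

definition feasible :: "'a measure \<Rightarrow> ('a \<Rightarrow> real) \<Rightarrow> real \<Rightarrow> ('a \<Rightarrow> real) \<Rightarrow> bool" where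
  "feasible M \<rho> x X \<longleftrightarrow> X \<in> borel_measurable M \<and> (AE \<omega> in M. X \<omega> \<ge> 0) \<and>
      (\<integral>\<^sup>+ \<omega>. ennreal (\<rho> \<omega> * X \<omega>) \<partial>M) \<le> ennreal x"

end

theory Submission
  imports Defs
begin

(*
  Write Q for the quantile function of rho and B for the event {rho <= beta}. By continuity
  of the CDF, P(B) = 1 - alpha. If a feasible X had V(X) > k, pick k < t < V(X). Then
  P(X > t) >= 1 - alpha = P(B), and since rho <= beta exactly on B, a Neyman-Pearson
  comparison gives E[rho 1{X>t}] >= E[rho 1_B]; hence
  x >= E[rho X] >= t E[rho 1{X>t}] > k E[rho 1_B] = x, a contradiction.

  For zeta, the substitution z = 1 - u turns the denominator into J(c) = int_0^(1-c) Q,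
  which decreases in c and is positive, so the supremum is attained at c = alpha. The
  quantile transform (Q pushes the uniform law on (0,1) forward to the law of rho) gives
  delta = int_0^1 Q >= J(alpha) + alpha beta > J(alpha).
*)

section \<open>Right-continuous quantiles\<close>

context real_distribution
begin

abbreviation Q :: "real \<Rightarrow> real" where "Q \<equiv> quantile_rc (cdf M)"

lemma bdd_below_cdf_gt: "0 < u \<Longrightarrow> bdd_below {t. u < cdf M t}"
proof -
  assume "0 < u"
  then obtain b where "\<And>t. t \<le> b \<Longrightarrow> cdf M t < u"
    using order_tendstoD(2)[OF cdf_lim_at_bot] by (auto simp: eventually_at_bot_linorder)
  then show ?thesis
    by (intro bdd_belowI[of _ b]) (metis less_asym mem_Collect_eq nle_le)
qed

lemma cdf_gt_nonempty: "u < 1 \<Longrightarrow> {t. u < cdf M t} \<noteq> {}"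
  using order_tendstoD(1)[OF cdf_lim_at_top_prob]
  by (metis (mono_tags) empty_Collect_eq eventually_at_top_linorder order_refl)

lemma quantile_rc_le: "bdd_below {t. u < cdf M t} \<Longrightarrow> u < cdf M t \<Longrightarrow> Q u \<le> t"
  unfolding quantile_rc_def by (rule cInf_lower) simp_all

lemma cdf_quantile_rc_ge:
  assumes "0 < u" "u < 1"
  shows "u \<le> cdf M (Q u)"
proof -
  have "cdf M (Q u) = (INF t\<in>{t. u < cdf M t}. cdf M t)"
    unfolding quantile_rc_def
    by (intro continuous_at_Inf_mono monoI cdf_nondecreasing cdf_is_right_cont
        cdf_gt_nonempty bdd_below_cdf_gt assms)
  also have "\<dots> \<ge> u"
    by (rule cINF_greatest[OF cdf_gt_nonempty[OF \<open>u < 1\<close>]]) auto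
  finally show ?thesis .
qed

lemma cdf_quantile_rc:
  assumes "isCont (cdf M) (Q u)" "0 < u" "u < 1"
  shows "cdf M (Q u) = u"
proof -
  have "cdf M (Sup {..<Q u}) = (SUP s\<in>{..<Q u}. cdf M s)"
    using assms(1) by (intro continuous_at_Sup_mono monoI cdf_nondecreasing)
      (auto simp: continuous_at_split)
  also have "\<dots> \<le> u"
    using quantile_rc_le[OF bdd_below_cdf_gt[OF \<open>0 < u\<close>]]
    by (intro cSUP_least) (auto simp: not_less[symmetric])
  finally show ?thesis
    using cdf_quantile_rc_ge[OF assms(2,3)] by simp
qed

lemma quantile_rc_mono: "0 < u \<Longrightarrow> u \<le> v \<Longrightarrow> v < 1 \<Longrightarrow> Q u \<le> Q v"
  unfolding quantile_rc_def
  by (rule cInf_superset_mono[OF cdf_gt_nonempty bdd_below_cdf_gt]) auto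

lemma quantile_rc_measurable: "Q \<in> borel_measurable (restrict_space lborel {0<..<1})"
proof -
  have "mono_on {0<..<1} Q"
    by (intro mono_onI quantile_rc_mono) auto
  then show ?thesis
    by (subst measurable_cong_sets[OF sets_restrict_space_cong[OF sets_lborel] refl])
      (rule borel_measurable_mono_on_fnc)
qed

lemma distr_quantile_rc_uniform: "distr (restrict_space lborel {0<..<1}) borel Q = M"
proof -
  let ?U = "restrict_space lborel {0<..<1::real}"
  interpret U: prob_space ?U
    by (auto simp: emeasure_restrict_space space_restrict_space intro!: prob_spaceI)
  note Q_meas[measurable] = quantile_rc_measurable
  have "cdf (distr ?U borel Q) x = cdf M x" for x
  proof -
    let ?S = "{u\<in>{0<..<1}. Q u \<le> x}"
    have "Q -` {..x} \<inter> space ?U \<in> sets ?U"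
      by measurable
    then have "?S \<in> sets lborel"
      by (auto simp: space_restrict_space sets_restrict_space_iff vimage_def Int_def conj_commute)
    then have S: "?S \<in> fmeasurable lborel"
      by (rule fmeasurableI2[of "{0<..<1}", rotated 2]) (auto simp: fmeasurable_def)
    have "cdf (distr ?U borel Q) x = measure ?U (Q -` {..x} \<inter> space ?U)"
      unfolding cdf_def[of "distr ?U borel Q"] by (rule measure_distr[OF Q_meas]) simp
    also have "\<dots> = measure lborel ?S"
      by (subst measure_restrict_space) (auto simp: space_restrict_space intro!: arg_cong[where f="measure lborel"])
    finally have cdf_eq: "cdf (distr ?U borel Q) x = measure lborel ?S" .
    have "{0<..<cdf M x} \<subseteq> ?S"
      using cdf_bounded_prob[of x] quantile_rc_le[OF bdd_below_cdf_gt] by fastforce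
    then have "measure lborel {0<..<cdf M x} \<le> measure lborel ?S"
      by (rule measure_mono_fmeasurable[OF _ _ S]) simp
    moreover have "?S \<subseteq> {0<..cdf M x}"
      using cdf_quantile_rc_ge order_trans[OF _ cdf_nondecreasing] by fastforce
    then have "measure lborel ?S \<le> measure lborel {0<..cdf M x}"
      by (rule measure_mono_fmeasurable[OF _ fmeasurableD[OF S]]) (simp add: fmeasurable_def cdf_nonneg)
    ultimately show ?thesis
      using cdf_eq cdf_nonneg[of x] by simp
  qed
  moreover have "real_distribution M"
    by unfold_locales
  ultimately show ?thesis
    by (intro cdf_unique ext) auto
qed

lemma set_integrable_quantile_rc_Ioo:
  assumes "integrable M (\<lambda>x. x)"
  shows "set_integrable lborel {0<..<1} Q"
proof -
  note [measurable] = quantile_rc_measurable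
  have "integrable (distr (restrict_space lborel {0<..<1}) borel Q) (\<lambda>x. x)"
    using assms by (simp add: distr_quantile_rc_uniform)
  then show ?thesis
    by (simp add: integrable_distr_eq integrable_restrict_space set_integrable_def)
qed

lemma integral_eq_set_integral_quantile_rc:
  "(\<integral>x. x \<partial>M) = (LINT u:{0<..<1}|lborel. Q u)"
proof -
  note [measurable] = quantile_rc_measurable
  have "(\<integral>x. x \<partial>M) = (\<integral>x. x \<partial>distr (restrict_space lborel {0<..<1}) borel Q)"
    by (simp add: distr_quantile_rc_uniform)
  then show ?thesis
    by (simp add: integral_distr integral_restrict_space set_lebesgue_integral_def)
qed

end

(* Positivity keeps Q finite at 0 too; the reflected integral in zeta evaluates Q at 0. *)
locale pos_real_distribution = real_distribution +
  assumes AE_pos: "AE x in M. 0 < x"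
begin

lemma cdf_nonpos: "t \<le> 0 \<Longrightarrow> cdf M t = 0"
  unfolding cdf_def using AE_pos by (subst prob_eq_0) (auto elim!: eventually_mono)

lemma pos_if_cdf_gt: "0 \<le> u \<Longrightarrow> u < cdf M t \<Longrightarrow> 0 < t"
  using cdf_nonpos[of t] by fastforce

lemma bdd_below_cdf_gt_nonneg: "0 \<le> u \<Longrightarrow> bdd_below {t. u < cdf M t}"
  using pos_if_cdf_gt by (intro bdd_belowI[of _ 0]) (auto intro: less_imp_le)

lemma quantile_rc_nonneg: "0 \<le> u \<Longrightarrow> u < 1 \<Longrightarrow> 0 \<le> Q u"
  unfolding quantile_rc_def using pos_if_cdf_gt
  by (intro cInf_greatest cdf_gt_nonempty) (auto intro: less_imp_le)

lemma quantile_rc_pos: "0 < u \<Longrightarrow> u < 1 \<Longrightarrow> 0 < Q u"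
  using cdf_quantile_rc_ge[of u] pos_if_cdf_gt[of 0 "Q u"] by linarith

lemma mono_on_quantile_rc: "mono_on {0..<1} Q"
proof (intro mono_onI)
  fix u v :: real assume uv: "u \<in> {0..<1}" "v \<in> {0..<1}" "u \<le> v"
  show "Q u \<le> Q v"
  proof (cases "0 < u \<or> u = v")
    case True
    then show ?thesis using uv quantile_rc_mono by auto
  next
    case False
    with uv have "u = 0" "0 < v" "v < 1" by auto
    then show ?thesis
      using cdf_quantile_rc_ge[of v] by (intro quantile_rc_le bdd_below_cdf_gt_nonneg) auto
  qed
qed

lemma set_integrable_quantile_rc_Icc: "p < 1 \<Longrightarrow> set_integrable lborel {0..p} Q"
proof -
  assume "p < 1"
  have "Q \<in> borel_measurable (restrict_space borel {0..p})"
    using \<open>p < 1\<close> by (intro borel_measurable_mono_on_fnc mono_on_subset[OF mono_on_quantile_rc]) auto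
  then have meas: "set_borel_measurable lborel {0..p} Q"
    unfolding set_borel_measurable_def by (subst (asm) borel_measurable_restrict_space_iff) auto
  have const: "set_integrable lborel {0..p} (\<lambda>_. Q p)"
    by (intro borel_integrable_atLeastAtMost') simp
  have "AE u in lborel. u \<in> {0..p} \<longrightarrow> norm (Q u) \<le> norm (Q p)"
  proof (intro AE_I2 impI)
    fix u assume "u \<in> {0..p}"
    then have "0 \<le> Q u" "Q u \<le> Q p"
      using \<open>p < 1\<close> by (auto intro: quantile_rc_nonneg mono_onD[OF mono_on_quantile_rc])
    then show "norm (Q u) \<le> norm (Q p)" by simp
  qed
  then show ?thesis
    by (rule set_integrable_bound[OF const meas])
qed

lemma set_integral_quantile_rc_mono:
  assumes "p \<le> q" "q < 1"
  shows "(LINT u:{0..p}|lborel. Q u) \<le> (LINT u:{0..q}|lborel. Q u)"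
  using assms set_integrable_quantile_rc_Icc[of p] set_integrable_quantile_rc_Icc[of q]
  unfolding set_lebesgue_integral_def set_integrable_def
  by (intro integral_mono) (auto intro: quantile_rc_nonneg split: split_indicator)

lemma set_integral_quantile_rc_pos:
  assumes "0 < p" "p < 1"
  shows "0 < (LINT u:{0..p}|lborel. Q u)"
proof -
  have "(\<integral>u. Q (p/2) * indicator {p/2..p} u \<partial>lborel) \<le> (LINT u:{0..p}|lborel. Q u)"
    using assms set_integrable_quantile_rc_Icc[of p] quantile_rc_mono[of "p/2"]
    unfolding set_lebesgue_integral_def set_integrable_def
    by (intro integral_mono) (auto intro: quantile_rc_nonneg split: split_indicator)
  moreover have "0 < Q (p/2) * (p/2)"
    using assms quantile_rc_pos[of "p/2"] by simp
  ultimately show ?thesis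
    using assms by simp
qed

lemma set_integral_quantile_rc_add_le_integral:
  assumes "integrable M (\<lambda>x. x)" "0 < p" "p < 1"
  shows "(LINT u:{0..p}|lborel. Q u) + (1 - p) * Q p \<le> (\<integral>x. x \<partial>M)"
proof -
  have head: "integrable lborel (\<lambda>u. indicator {0..p} u * Q u)"
    using set_integrable_quantile_rc_Icc[OF \<open>p < 1\<close>] by (simp add: set_integrable_def)
  have tail: "integrable lborel (\<lambda>u. Q p * indicator {p<..<1} u)"
    using \<open>p < 1\<close> by (intro integrable_mult_right integrable_real_indicator) auto
  have "(LINT u:{0..p}|lborel. Q u) + (1 - p) * Q p
      = (\<integral>u. indicator {0..p} u * Q u + Q p * indicator {p<..<1} u \<partial>lborel)"
    using \<open>p < 1\<close> by (simp add: set_lebesgue_integral_def Bochner_Integration.integral_add[OF head tail])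
  also have "\<dots> \<le> (\<integral>u. indicator {0<..<1} u * Q u \<partial>lborel)"
  proof (rule integral_mono_AE[OF Bochner_Integration.integrable_add[OF head tail]])
    show "integrable lborel (\<lambda>u. indicator {0<..<1} u * Q u)"
      using set_integrable_quantile_rc_Ioo[OF assms(1)] by (simp add: set_integrable_def)
    show "AE u in lborel. indicator {0..p} u * Q u + Q p * indicator {p<..<1} u
        \<le> indicator {0<..<1} u * Q u"
      using AE_lborel_singleton[of 0]
      by eventually_elim (use assms(2,3) in \<open>auto intro: quantile_rc_mono split: split_indicator\<close>)
  qed
  also have "\<dots> = (\<integral>x. x \<partial>M)"
    using integral_eq_set_integral_quantile_rc by (simp add: set_lebesgue_integral_def)
  finally show ?thesis .
qed

end

section \<open>The denominator of zeta\<close>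

lemma (in prob_space) pos_real_distribution_distr:
  assumes "X \<in> borel_measurable M" "AE \<omega> in M. 0 < X \<omega>"
  shows "pos_real_distribution (distr M borel X)"
proof -
  interpret X: real_distribution "distr M borel X"
    using assms(1) by (rule real_distribution_distr)
  show ?thesis
    using assms by unfold_locales (simp add: AE_distr_iff)
qed

lemma set_integral_reflect:
  fixes f :: "real \<Rightarrow> real"
  shows "(LINT z:{a..b}|lborel. f (s - z)) = (LINT u:{s-b..s-a}|lborel. f u)"
  unfolding set_lebesgue_integral_def
  by (subst lborel_integral_real_affine[where c="-1" and t=s])
     (auto intro!: Bochner_Integration.integral_cong split: split_indicator)

lemma zeta_eq_set_integral_quantile_rc:
  "zeta M \<rho> \<alpha> c =
    (if c \<le> \<alpha> then 1 else 0) / (LINT u:{0..1-c}|lborel. quantile_rc (cdf (distr M borel \<rho>)) u)"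
  unfolding zeta_def rv_quantile_def using set_integral_reflect[where a=c and b=1 and s=1] by simp

lemma SUP_threshold_divide_antimono:
  fixes J :: "real \<Rightarrow> real"
  assumes "0 < \<alpha>" "\<alpha> < 1" "0 < J \<alpha>" "\<And>c. 0 < c \<Longrightarrow> c \<le> \<alpha> \<Longrightarrow> J \<alpha> \<le> J c"
  shows "(SUP c\<in>{0<..<1}. (if c \<le> \<alpha> then 1 else 0) / J c) = 1 / J \<alpha>"
proof (rule cSup_eq_maximum)
  show "1 / J \<alpha> \<in> (\<lambda>c. (if c \<le> \<alpha> then 1 else 0) / J c) ` {0<..<1}"
    using assms(1,2) by force
  fix z assume "z \<in> (\<lambda>c. (if c \<le> \<alpha> then 1 else 0) / J c) ` {0<..<1}"
  then obtain c where "0 < c" "z = (if c \<le> \<alpha> then 1 else 0) / J c"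
    by auto
  then show "z \<le> 1 / J \<alpha>"
    using assms(3) assms(4)[of c] by (auto intro: divide_left_mono)
qed

lemma (in prob_space) SUP_zeta_eq:
  assumes "\<rho> \<in> borel_measurable M" "AE \<omega> in M. 0 < \<rho> \<omega>" "0 < \<alpha>" "\<alpha> < 1"
  shows "(SUP c\<in>{0<..<1}. zeta M \<rho> \<alpha> c) = zeta M \<rho> \<alpha> \<alpha>"
proof -
  interpret D: pos_real_distribution "distr M borel \<rho>"
    using assms(1,2) by (rule pos_real_distribution_distr)
  let ?J = "\<lambda>c. LINT u:{0..1-c}|lborel. D.Q u"
  have "(SUP c\<in>{0<..<1}. zeta M \<rho> \<alpha> c) = (SUP c\<in>{0<..<1}. (if c \<le> \<alpha> then 1 else 0) / ?J c)"
    by (simp add: zeta_eq_set_integral_quantile_rc)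
  also have "\<dots> = 1 / ?J \<alpha>"
    using assms(3,4)
    by (intro SUP_threshold_divide_antimono D.set_integral_quantile_rc_pos D.set_integral_quantile_rc_mono) auto
  finally show ?thesis
    by (simp add: zeta_eq_set_integral_quantile_rc)
qed

lemma (in prob_space) inverse_integral_less_zeta:
  assumes "\<rho> \<in> borel_measurable M" "AE \<omega> in M. 0 < \<rho> \<omega>" "integrable M \<rho>" "0 < \<alpha>" "\<alpha> < 1"
  shows "1 / (\<integral>\<omega>. \<rho> \<omega> \<partial>M) < zeta M \<rho> \<alpha> \<alpha>"
proof -
  interpret D: pos_real_distribution "distr M borel \<rho>"
    using assms(1,2) by (rule pos_real_distribution_distr)
  let ?J = "LINT u:{0..1-\<alpha>}|lborel. D.Q u"
  have "integrable (distr M borel \<rho>) (\<lambda>x. x)"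
    using assms(1,3) by (simp add: integrable_distr_eq)
  then have "?J + (1 - (1 - \<alpha>)) * D.Q (1 - \<alpha>) \<le> (\<integral>x. x \<partial>distr M borel \<rho>)"
    using assms(4,5) by (intro D.set_integral_quantile_rc_add_le_integral) auto
  then have "?J + \<alpha> * D.Q (1 - \<alpha>) \<le> (\<integral>\<omega>. \<rho> \<omega> \<partial>M)"
    using assms(1) by (simp add: integral_distr)
  moreover have "0 < ?J"
    using assms(4,5) by (intro D.set_integral_quantile_rc_pos) auto
  moreover have "0 < D.Q (1 - \<alpha>)"
    using assms(4,5) by (intro D.quantile_rc_pos) auto
  ultimately have "?J < (\<integral>\<omega>. \<rho> \<omega> \<partial>M)"
    using mult_pos_pos[OF assms(4)] by fastforce
  with \<open>0 < ?J\<close> show ?thesis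
    by (simp add: zeta_eq_set_integral_quantile_rc frac_less2)
qed

section \<open>Quantile maximisation under a budget constraint\<close>

lemma cdf_distr_eq:
  "X \<in> borel_measurable M \<Longrightarrow> cdf (distr M borel X) t = measure M {\<omega>\<in>space M. X \<omega> \<le> t}"
  by (simp add: cdf_def measure_distr vimage_def Int_def conj_commute)

lemma (in prob_space) prob_le_if_less_rv_quantile:
  assumes "X \<in> borel_measurable M" "0 < \<alpha>" "t < rv_quantile M X \<alpha>"
  shows "prob {\<omega>\<in>space M. X \<omega> \<le> t} \<le> \<alpha>"
proof -
  interpret X: real_distribution "distr M borel X"
    using assms(1) by (rule real_distribution_distr)
  have "\<not> \<alpha> < cdf (distr M borel X) t"
    using assms(3) X.quantile_rc_le[OF X.bdd_below_cdf_gt[OF assms(2)]]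
    unfolding rv_quantile_def by fastforce
  then show ?thesis
    by (simp add: cdf_distr_eq[OF assms(1)])
qed

lemma (in prob_space) rv_quantile_mult_indicator:
  assumes "{\<omega>\<in>space M. P \<omega>} \<in> events" "prob {\<omega>\<in>space M. P \<omega>} = 1 - \<alpha>"
    and "0 \<le> \<alpha>" "\<alpha> < 1" "0 < k"
  shows "rv_quantile M (\<lambda>\<omega>. k * indicator {\<omega>. P \<omega>} \<omega>) \<alpha> = k"
proof -
  let ?X = "\<lambda>\<omega>. k * indicator {\<omega>. P \<omega>} \<omega> :: real"
  have X[measurable]: "?X \<in> borel_measurable M"
    using assms(1) by measurable
  have "prob {\<omega>\<in>space M. ?X \<omega> \<le> t} = (if k \<le> t then 1 else if 0 \<le> t then \<alpha> else 0)" for t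
  proof -
    have "{\<omega>\<in>space M. ?X \<omega> \<le> t} =
        (if k \<le> t then space M else if 0 \<le> t then space M - {\<omega>\<in>space M. P \<omega>} else {})"
      using \<open>0 < k\<close> by (auto split: split_indicator)
    then show ?thesis
      using assms(1,2) by (simp add: prob_compl prob_space)
  qed
  then have "{t. \<alpha> < cdf (distr M borel ?X) t} = {k..}"
    using assms(3,4) by (auto simp: cdf_distr_eq[OF X])
  then show ?thesis
    by (simp add: rv_quantile_def quantile_rc_def)
qed

lemma integrable_mult_indicator_Collect:
  fixes f :: "'a \<Rightarrow> real"
  assumes "integrable M f" "{\<omega>\<in>space M. P \<omega>} \<in> sets M"
  shows "integrable M (\<lambda>\<omega>. f \<omega> * indicator {\<omega>. P \<omega>} \<omega>)"
proof (rule Bochner_Integration.integrable_bound[OF assms(1)])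
  have "(\<lambda>\<omega>. indicator {\<omega>. P \<omega>} \<omega> :: real) \<in> borel_measurable M"
    using borel_measurable_indicator'[of M "\<lambda>\<omega>. \<omega>" "\<lambda>_. {\<omega>. P \<omega>}"] assms(2) by simp
  then show "(\<lambda>\<omega>. f \<omega> * indicator {\<omega>. P \<omega>} \<omega>) \<in> borel_measurable M"
    using assms(1) by measurable
qed (simp split: split_indicator)

lemma integral_mult_indicator_pos:
  fixes \<rho> :: "'a \<Rightarrow> real"
  assumes "integrable M \<rho>" "AE \<omega> in M. 0 < \<rho> \<omega>"
    and "{\<omega>\<in>space M. P \<omega>} \<in> sets M" "measure M {\<omega>\<in>space M. P \<omega>} \<noteq> 0"
  shows "0 < (\<integral>\<omega>. \<rho> \<omega> * indicator {\<omega>. P \<omega>} \<omega> \<partial>M)"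
proof -
  have int: "integrable M (\<lambda>\<omega>. \<rho> \<omega> * indicator {\<omega>. P \<omega>} \<omega>)"
    using assms(1,3) by (rule integrable_mult_indicator_Collect)
  have nonneg: "AE \<omega> in M. 0 \<le> \<rho> \<omega> * indicator {\<omega>. P \<omega>} \<omega>"
    using assms(2) by eventually_elim (simp split: split_indicator)
  have "\<not> (AE \<omega> in M. \<not> P \<omega>)"
    using assms(3,4) by (subst AE_iff_measurable[OF _ refl]) (auto simp: measure_def)
  moreover have "AE \<omega> in M. \<not> P \<omega>" if "AE \<omega> in M. \<rho> \<omega> * indicator {\<omega>. P \<omega>} \<omega> = 0"
    using that assms(2) by eventually_elim (auto simp: indicator_def)
  ultimately have "\<not> (AE \<omega> in M. \<rho> \<omega> * indicator {\<omega>. P \<omega>} \<omega> = 0)"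
    by blast
  then show ?thesis
    using integral_nonneg_eq_0_iff_AE[OF int nonneg] integral_nonneg_AE[OF nonneg] by linarith
qed

lemma feasible_mult_indicator:
  fixes \<rho> :: "'a \<Rightarrow> real"
  assumes "integrable M \<rho>" "AE \<omega> in M. 0 \<le> \<rho> \<omega>" "{\<omega>\<in>space M. P \<omega>} \<in> sets M" "0 \<le> k"
  shows "feasible M \<rho> (k * (\<integral>\<omega>. \<rho> \<omega> * indicator {\<omega>. P \<omega>} \<omega> \<partial>M)) (\<lambda>\<omega>. k * indicator {\<omega>. P \<omega>} \<omega>)"
proof -
  have "integrable M (\<lambda>\<omega>. k * (\<rho> \<omega> * indicator {\<omega>. P \<omega>} \<omega>))"
    using assms(1,3) by (intro integrable_mult_right integrable_mult_indicator_Collect)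
  moreover have "AE \<omega> in M. 0 \<le> \<rho> \<omega> * (k * indicator {\<omega>. P \<omega>} \<omega>)"
    using assms(2) by eventually_elim (use \<open>0 \<le> k\<close> in \<open>simp split: split_indicator\<close>)
  ultimately have "(\<integral>\<^sup>+\<omega>. ennreal (\<rho> \<omega> * (k * indicator {\<omega>. P \<omega>} \<omega>)) \<partial>M)
      = ennreal (k * (\<integral>\<omega>. \<rho> \<omega> * indicator {\<omega>. P \<omega>} \<omega> \<partial>M))"
    by (subst nn_integral_eq_integral) (simp_all add: ac_simps)
  then show ?thesis
    using assms(3,4) by (simp add: feasible_def)
qed

lemma mult_integral_indicator_le_nn_integral:
  fixes \<rho> X :: "'a \<Rightarrow> real"
  assumes "integrable M \<rho>" "AE \<omega> in M. 0 \<le> \<rho> \<omega>" "X \<in> borel_measurable M" "0 \<le> t"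
  shows "ennreal (t * (\<integral>\<omega>. \<rho> \<omega> * indicator {\<omega>\<in>space M. t < X \<omega>} \<omega> \<partial>M))
    \<le> (\<integral>\<^sup>+\<omega>. ennreal (\<rho> \<omega> * X \<omega>) \<partial>M)"
proof -
  have "ennreal (t * (\<integral>\<omega>. \<rho> \<omega> * indicator {\<omega>\<in>space M. t < X \<omega>} \<omega> \<partial>M))
      = (\<integral>\<^sup>+\<omega>. ennreal (t * (\<rho> \<omega> * indicator {\<omega>\<in>space M. t < X \<omega>} \<omega>)) \<partial>M)"
    using assms by (subst nn_integral_eq_integral)
      (auto intro!: integrable_real_mult_indicator elim: eventually_mono split: split_indicator)
  also have "\<dots> \<le> (\<integral>\<^sup>+\<omega>. ennreal (\<rho> \<omega> * X \<omega>) \<partial>M)"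
    using assms(2) by (intro nn_integral_mono_AE, eventually_elim)
      (use \<open>0 \<le> t\<close> in \<open>auto intro!: ennreal_leI mult_right_mono simp: mult.commute split: split_indicator\<close>)
  finally show ?thesis .
qed

lemma (in prob_space) integral_mult_indicator_sublevel_le:
  fixes \<rho> :: "'a \<Rightarrow> real"
  assumes "integrable M \<rho>" "A \<in> events" "0 \<le> \<beta>" "prob {\<omega>\<in>space M. \<rho> \<omega> \<le> \<beta>} \<le> prob A"
  shows "(\<integral>\<omega>. \<rho> \<omega> * indicator {\<omega>. \<rho> \<omega> \<le> \<beta>} \<omega> \<partial>M) \<le> (\<integral>\<omega>. \<rho> \<omega> * indicator A \<omega> \<partial>M)"
proof -
  let ?B = "{\<omega>\<in>space M. \<rho> \<omega> \<le> \<beta>}"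
  let ?d = "\<lambda>\<omega>. indicator A \<omega> - indicator ?B \<omega> :: real"
  have [measurable]: "\<rho> \<in> borel_measurable M"
    using assms(1) by auto
  have B: "?B \<in> events"
    by measurable
  have int_d: "integrable M ?d"
    using assms(2) B by (intro Bochner_Integration.integrable_diff integrable_real_indicator)
      (auto simp: less_top[symmetric])
  have int_\<rho>d: "integrable M (\<lambda>\<omega>. \<rho> \<omega> * ?d \<omega>)"
    using assms(1,2) B by (auto intro!: integrable_real_mult_indicator simp: right_diff_distrib)
  have "0 \<le> \<beta> * (prob A - prob ?B)"
    using assms(3,4) by simp
  also have "\<dots> = (\<integral>\<omega>. \<beta> * ?d \<omega> \<partial>M)"
    using assms(2) B by (simp add: less_top[symmetric])
  \<comment> \<open>\<open>(\<rho> - \<beta>) ?d \<ge> 0\<close>, as \<open>\<rho> \<le> \<beta>\<close> holds exactly on \<open>?B\<close>\<close>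
  also have "\<dots> \<le> (\<integral>\<omega>. \<rho> \<omega> * ?d \<omega> \<partial>M)"
    using int_d int_\<rho>d by (intro integral_mono) (auto split: split_indicator)
  also have "\<dots> = (\<integral>\<omega>. \<rho> \<omega> * indicator A \<omega> \<partial>M) - (\<integral>\<omega>. \<rho> \<omega> * indicator ?B \<omega> \<partial>M)"
    using assms(1,2) B
    by (simp add: right_diff_distrib integrable_real_mult_indicator)
  also have "(\<integral>\<omega>. \<rho> \<omega> * indicator ?B \<omega> \<partial>M) = (\<integral>\<omega>. \<rho> \<omega> * indicator {\<omega>. \<rho> \<omega> \<le> \<beta>} \<omega> \<partial>M)"
    by (rule Bochner_Integration.integral_cong) (auto split: split_indicator)
  finally show ?thesis
    by simp
qed

lemma (in prob_space) rv_quantile_le_of_feasible: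
  fixes \<rho> X :: "'a \<Rightarrow> real"
  assumes "integrable M \<rho>" "AE \<omega> in M. 0 \<le> \<rho> \<omega>" "feasible M \<rho> x X" "0 \<le> x"
    and "0 < \<alpha>" "0 \<le> \<beta>" "prob {\<omega>\<in>space M. \<rho> \<omega> \<le> \<beta>} \<le> 1 - \<alpha>"
    and E_pos: "0 < (\<integral>\<omega>. \<rho> \<omega> * indicator {\<omega>. \<rho> \<omega> \<le> \<beta>} \<omega> \<partial>M)"
  shows "rv_quantile M X \<alpha> \<le> x / (\<integral>\<omega>. \<rho> \<omega> * indicator {\<omega>. \<rho> \<omega> \<le> \<beta>} \<omega> \<partial>M)"
proof (rule dense_le)
  let ?E = "\<integral>\<omega>. \<rho> \<omega> * indicator {\<omega>. \<rho> \<omega> \<le> \<beta>} \<omega> \<partial>M"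
  fix t assume t: "t < rv_quantile M X \<alpha>"
  show "t \<le> x / ?E"
  proof (cases "t \<le> 0")
    case True
    moreover have "0 \<le> x / ?E"
      using assms(4) E_pos by simp
    ultimately show ?thesis
      by linarith
  next
    case False
    have [measurable]: "X \<in> borel_measurable M"
      using assms(3) by (simp add: feasible_def)
    let ?A = "{\<omega>\<in>space M. t < X \<omega>}"
    have "?A = space M - {\<omega>\<in>space M. X \<omega> \<le> t}"
      by auto
    then have "1 - \<alpha> \<le> prob ?A"
      using prob_le_if_less_rv_quantile[OF _ assms(5) t] by (simp add: prob_compl)
    then have "?E \<le> (\<integral>\<omega>. \<rho> \<omega> * indicator ?A \<omega> \<partial>M)"
      using assms(1,6,7) by (intro integral_mult_indicator_sublevel_le) auto
    then have "t * ?E \<le> t * (\<integral>\<omega>. \<rho> \<omega> * indicator ?A \<omega> \<partial>M)"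
      using False by simp
    also have "\<dots> \<le> x"
    proof -
      have "ennreal (t * (\<integral>\<omega>. \<rho> \<omega> * indicator ?A \<omega> \<partial>M)) \<le> (\<integral>\<^sup>+\<omega>. ennreal (\<rho> \<omega> * X \<omega>) \<partial>M)"
        using assms(1,2) False by (intro mult_integral_indicator_le_nn_integral) auto
      also have "\<dots> \<le> ennreal x"
        using assms(3) by (simp add: feasible_def)
      finally show ?thesis
        using assms(4) by simp
    qed
    finally show ?thesis
      using E_pos by (simp add: pos_le_divide_eq)
  qed
qed

theorem corollary1:
  fixes M :: "'a measure" and \<rho> :: "'a \<Rightarrow> real" and \<alpha> x :: real
  assumes "prob_space M"
    and "\<rho> \<in> borel_measurable M"
    and "AE \<omega> in M. \<rho> \<omega> > 0"
    and "integrable M \<rho>"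
    and "continuous_on UNIV (cdf (distr M borel \<rho>))"
    and "0 < \<alpha>" "\<alpha> < 1" "x > 0"
  defines "\<delta> \<equiv> (\<integral>\<omega>. \<rho> \<omega> \<partial>M)"
    and "\<beta> \<equiv> rv_quantile M \<rho> (1 - \<alpha>)"
  defines "k \<equiv> x / (\<integral>\<omega>. \<rho> \<omega> * indicator {\<omega>. \<rho> \<omega> \<le> \<beta>} \<omega> \<partial>M)"
  defines "Xstar \<equiv> (\<lambda>\<omega>. k * indicator {\<omega>. \<rho> \<omega> \<le> \<beta>} \<omega>)"
  shows "(SUP c\<in>{0<..<1}. zeta M \<rho> \<alpha> c) = zeta M \<rho> \<alpha> \<alpha>
    \<and> zeta M \<rho> \<alpha> \<alpha> > 1 / \<delta>
    \<and> feasible M \<rho> x Xstar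
    \<and> (\<forall>X. feasible M \<rho> x X \<longrightarrow> rv_quantile M X \<alpha> \<le> rv_quantile M Xstar \<alpha>)"
proof -
  interpret prob_space M by fact
  interpret D: pos_real_distribution "distr M borel \<rho>"
    using assms(2,3) by (rule pos_real_distribution_distr)
  note [measurable] = assms(2)
  let ?E = "\<integral>\<omega>. \<rho> \<omega> * indicator {\<omega>. \<rho> \<omega> \<le> \<beta>} \<omega> \<partial>M"
  have \<beta>_pos: "0 < \<beta>"
    using assms(6,7) by (simp add: \<beta>_def rv_quantile_def D.quantile_rc_pos)
  have "isCont (cdf (distr M borel \<rho>)) \<beta>"
    using assms(5) by (simp add: continuous_on_eq_continuous_at)
  then have "cdf (distr M borel \<rho>) \<beta> = 1 - \<alpha>"
    using D.cdf_quantile_rc assms(6,7) by (simp add: \<beta>_def rv_quantile_def)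
  then have prob_B: "prob {\<omega>\<in>space M. \<rho> \<omega> \<le> \<beta>} = 1 - \<alpha>"
    by (simp add: cdf_distr_eq)
  have E_pos: "0 < ?E"
    using assms(3,4,7) prob_B by (intro integral_mult_indicator_pos) auto
  have AE_nonneg: "AE \<omega> in M. 0 \<le> \<rho> \<omega>"
    using assms(3) by eventually_elim simp
  have "feasible M \<rho> (k * ?E) Xstar"
    unfolding Xstar_def using assms(4,8) E_pos AE_nonneg
    by (intro feasible_mult_indicator) (auto simp: k_def)
  moreover have "k * ?E = x"
    using E_pos by (simp add: k_def)
  moreover have "rv_quantile M Xstar \<alpha> = k"
    unfolding Xstar_def using prob_B assms(6,7,8) E_pos
    by (intro rv_quantile_mult_indicator) (auto simp: k_def)
  moreover have "rv_quantile M X \<alpha> \<le> k" if "feasible M \<rho> x X" for X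
    unfolding k_def using that assms(4,6,7,8) AE_nonneg \<beta>_pos prob_B E_pos
    by (intro rv_quantile_le_of_feasible) auto
  ultimately show ?thesis
    using SUP_zeta_eq[OF assms(2,3,6,7)] inverse_integral_less_zeta[OF assms(2,3,4,6,7)]
    by (simp add: \<delta>_def)
qed

end
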